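(* For an integer $k\ge1$, let $T_k$ be a complete ternary tree of height $k-1$ with root $r_k$ (so for $k=1$, $T_k$ is the single vertex $r_k$, which is also its unique leaf), and let $G_k^*$ be the multigraph obtained from $T_k$ by adding a new vertex $a_k$, one edge $a_kr_k$, and three parallel edges between $a_k$ and each leaf of $T_k$. Then $\mathrm{pw}(G_k^* )\ge k$ for every $k\ge 1$.
   Context: The height of a rooted tree is the maximum number of edges on a root-to-leaf path; a complete ternary tree of height $h$ is the rooted tree in which every non-leaf vertex has exactly three children and all leaves are at distance $h$ from the root. A path-decomposition of a multigraph $H$ is a sequence $(X_0,\dots,X_s)$ of subsets of $V(H)$ such that for each vertex $v$ the indices $i$ with $v\in X_i$ form a non-empty interval, and each edge has both ends in some $X_i$; its width is $\max_i|X_i|-1$, and the pathwidth $\mathrm{pw}(H)$ is the minimum width of a path-decomposition. *)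

theory Defs
  imports Main "HOL-Library.Multiset"
begin

text \<open>Multigraphs: a vertex set V and a multiset E of edges, each edge given by its
  (ordered) pair of ends; parallel edges are repeated elements of E.\<close>

definition is_path_decomp :: "'a set \<Rightarrow> ('a \<times> 'a) multiset \<Rightarrow> 'a set list \<Rightarrow> bool" where
  "is_path_decomp V E Xs \<longleftrightarrow>
     Xs \<noteq> [] \<and>
     (\<forall>X\<in>set Xs. X \<subseteq> V) \<and>
     (\<forall>v\<in>V. (\<exists>i<length Xs. v \<in> Xs ! i) \<and>
            (\<forall>i j l. i \<le> l \<and> l \<le> j \<and> j < length Xs \<and> v \<in> Xs ! i \<and> v \<in> Xs ! j
                     \<longrightarrow> v \<in> Xs ! l)) \<and>
     (\<forall>(u, v)\<in>#E. \<exists>i<length Xs. u \<in> Xs ! i \<and> v \<in> Xs ! i)"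

definition pd_width :: "'a set list \<Rightarrow> nat" where
  "pd_width Xs = Max (card ` set Xs) - 1"

definition pathwidth :: "'a set \<Rightarrow> ('a \<times> 'a) multiset \<Rightarrow> nat" where
  "pathwidth V E = (LEAST w. \<exists>Xs. is_path_decomp V E Xs \<and> pd_width Xs = w)"

text \<open>Complete ternary tree of height k-1: vertices are words over {0,1,2} of length < k,
  the root is the empty word, children of xs are xs@[0], xs@[1], xs@[2].\<close>

definition tern_verts :: "nat \<Rightarrow> nat list set" where
  "tern_verts k = {xs. length xs < k \<and> set xs \<subseteq> {0,1,2}}"

definition tern_leaves :: "nat \<Rightarrow> nat list set" where
  "tern_leaves k = {xs. length xs = k - 1 \<and> set xs \<subseteq> {0,1,2}}"

definition tern_edges :: "nat \<Rightarrow> (nat list \<times> nat list) set" where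
  "tern_edges k = {(xs, xs @ [i]) | xs i. i \<in> {0,1,2} \<and> xs @ [i] \<in> tern_verts k}"

text \<open>G_k^*: vertex None is a_k, Some xs are tree vertices; root r_k = Some [].\<close>

definition Gstar_V :: "nat \<Rightarrow> nat list option set" where
  "Gstar_V k = insert None (Some ` tern_verts k)"

definition Gstar_E :: "nat \<Rightarrow> (nat list option \<times> nat list option) multiset" where
  "Gstar_E k =
     mset_set ((\<lambda>(x, y). (Some x, Some y)) ` tern_edges k)
     + {#(None, Some [])#}
     + (\<Sum>l\<in>tern_leaves k. replicate_mset 3 (None, Some l))"

end

theory Submission
  imports Defs
begin

text \<open>Only two properties of a path-decomposition are used: the bags containing a vertex
  form an interval of indices, and the intervals of adjacent vertices meet. For a subtree with
  \<open>m\<close> levels and an interval \<open>J\<close> that meets the interval of its root and contains that of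
  \<open>a\<^sub>k\<close>, some index \<open>p\<close> lies in \<open>m + 1\<close> of these intervals, counting \<open>J\<close> as one of them.
  Induct on \<open>m\<close>: give each of the three child subtrees the interval \<open>J \<union> I(root)\<close>, take
  their deep indices and let \<open>p\<close> be the middle one. If the left (right) child subtree has no
  interval through \<open>p\<close>, then, being connected, it lies entirely left (right) of \<open>p\<close>; since
  it meets the root interval and, through a leaf, the interval of \<open>a\<^sub>k\<close>, both the root
  interval and \<open>J\<close> reach past \<open>p\<close> on that side. So either one of the outer children adds
  an interval at \<open>p\<close>, or \<open>p\<close> lies in both the root interval and \<open>J\<close>. For the whole tree
  with \<open>J\<close> the interval of \<open>a\<^sub>k\<close> this gives a bag with \<open>k + 1\<close> vertices.\<close>

definition ord_convex :: "'a::linorder set \<Rightarrow> bool" where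
  "ord_convex S \<longleftrightarrow> (\<forall>x\<in>S. \<forall>y\<in>S. {x..y} \<subseteq> S)"

lemma ord_convexD: "ord_convex S \<Longrightarrow> x \<in> S \<Longrightarrow> y \<in> S \<Longrightarrow> x \<le> p \<Longrightarrow> p \<le> y \<Longrightarrow> p \<in> S"
  unfolding ord_convex_def by (meson atLeastAtMost_iff subsetD)

lemma ord_convex_between: "ord_convex S \<Longrightarrow> \<exists>x\<in>S. x < p \<Longrightarrow> \<exists>y\<in>S. p < y \<Longrightarrow> p \<in> S"
  by (meson less_imp_le ord_convexD)

lemma ord_convex_avoid:
  assumes "ord_convex S" "p \<notin> S"
  shows "S \<subseteq> {..<p} \<or> S \<subseteq> {p<..}"
proof (rule ccontr)
  assume "\<not> ?thesis"
  then obtain x y where "x \<in> S" "y \<in> S" "\<not> x < p" "\<not> p < y"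
    by auto
  with assms(2) have "y < p" "p < x"
    by (metis linorder_neqE)+
  with \<open>x \<in> S\<close> \<open>y \<in> S\<close> have "p \<in> S"
    using ord_convex_between[OF assms(1)] by blast
  with assms(2) show False ..
qed

lemma ord_convex_Un:
  assumes "ord_convex A" "ord_convex B" "A \<inter> B \<noteq> {}"
  shows "ord_convex (A \<union> B)"
proof -
  obtain c where c: "c \<in> A" "c \<in> B"
    using assms(3) by blast
  have "z \<in> A \<union> B" if "x \<in> A \<union> B" "y \<in> A \<union> B" "x \<le> z" "z \<le> y" for x y z
  proof (cases "z \<le> c")
    case True
    then show ?thesis
      using that(1,3) ord_convexD[OF assms(1) _ c(1)] ord_convexD[OF assms(2) _ c(2)] by blast
  next
    case False
    then have "c \<le> z"
      by simp
    then show ?thesis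
      using that(2,4) ord_convexD[OF assms(1) c(1)] ord_convexD[OF assms(2) c(2)] by blast
  qed
  then show ?thesis
    unfolding ord_convex_def by (meson atLeastAtMost_iff subsetI)
qed

definition subtree :: "nat \<Rightarrow> nat list \<Rightarrow> nat list set" where
  "subtree m w = {w @ u | u. length u < m \<and> set u \<subseteq> {0,1,2}}"

lemma subtree_0 [simp]: "subtree 0 w = {}"
  unfolding subtree_def by simp

lemma subtree_Suc: "subtree (Suc m) w = insert w (\<Union>i\<in>{0,1,2}. subtree m (w @ [i]))"
proof (intro equalityI subsetI)
  fix v assume "v \<in> subtree (Suc m) w"
  then obtain u where u: "v = w @ u" "length u < Suc m" "set u \<subseteq> {0,1,2}"
    unfolding subtree_def by blast
  show "v \<in> insert w (\<Union>i\<in>{0,1,2}. subtree m (w @ [i]))"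
  proof (cases u)
    case (Cons i u')
    with u have "v \<in> subtree m (w @ [i])" "i \<in> {0,1,2}"
      unfolding subtree_def by auto
    then show ?thesis by blast
  qed (use u in simp)
next
  fix v assume "v \<in> insert w (\<Union>i\<in>{0,1,2}. subtree m (w @ [i]))"
  then show "v \<in> subtree (Suc m) w"
    unfolding subtree_def by (auto intro: exI[of _ "[]"] exI[of _ "_ # _"])
qed

lemma finite_subtree: "finite (subtree m w)"
  by (induction m arbitrary: w) (simp_all add: subtree_Suc)

lemma tern_verts_eq_subtree: "tern_verts k = subtree k []"
  unfolding tern_verts_def subtree_def by simp

lemma subtree_subset_tern_verts:
  "length w + m \<le> k \<Longrightarrow> set w \<subseteq> {0,1,2} \<Longrightarrow> subtree m w \<subseteq> tern_verts k"
  unfolding tern_verts_def subtree_def by auto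

lemma root_notin_child_subtree: "w \<notin> subtree m (w @ [i])"
  unfolding subtree_def by simp

lemma subtree_contains_leaf:
  assumes "length w + m = k" "0 < m" "set w \<subseteq> {0,1,2}"
  shows "\<exists>l\<in>subtree m w. l \<in> tern_leaves k"
proof -
  have "w @ replicate (m - 1) 0 \<in> subtree m w \<inter> tern_leaves k"
    using assms unfolding subtree_def tern_leaves_def by (auto simp: set_replicate_conv_if)
  then show ?thesis by blast
qed

lemma sort_three:
  fixes f :: "nat \<Rightarrow> 'a::linorder"
  obtains a b c where "{a, b, c} = {0, 1, 2}" "distinct [a, b, c]" "f a \<le> f b" "f b \<le> f c"
proof -
  have "f 0 \<le> f 1 \<or> f 1 \<le> f 0" "f 1 \<le> f 2 \<or> f 2 \<le> f 1" "f 0 \<le> f 2 \<or> f 2 \<le> f 0"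
    by (simp_all add: linear)
  then show thesis
    using that[of 0 1 2] that[of 0 2 1] that[of 1 0 2] that[of 1 2 0] that[of 2 0 1] that[of 2 1 0]
    by (auto simp: insert_commute)
qed

text \<open>\<open>I v\<close> is the set of indices of the bags containing the tree vertex \<open>v\<close>, and \<open>A\<close> that
  of the bags containing \<open>a\<^sub>k\<close>.\<close>

locale ternary_interval_model =
  fixes k :: nat and I :: "nat list \<Rightarrow> 'a::linorder set" and A :: "'a set"
  assumes ord_convex_interval: "v \<in> tern_verts k \<Longrightarrow> ord_convex (I v)"
    and child_overlap: "i \<in> {0,1,2} \<Longrightarrow> v @ [i] \<in> tern_verts k \<Longrightarrow> I v \<inter> I (v @ [i]) \<noteq> {}"
    and leaf_overlap: "l \<in> tern_leaves k \<Longrightarrow> I l \<inter> A \<noteq> {}"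
begin

definition covering :: "nat \<Rightarrow> nat list \<Rightarrow> 'a \<Rightarrow> nat" where
  "covering m w p = card {v \<in> subtree m w. p \<in> I v}"

lemma covering_eq_0_iff: "covering m w p = 0 \<longleftrightarrow> (\<forall>v\<in>subtree m w. p \<notin> I v)"
  unfolding covering_def using finite_subtree[of m w] by auto

lemma covering_Suc:
  "covering (Suc m) w p = (if p \<in> I w then 1 else 0) + (\<Sum>i\<in>{0,1,2}. covering m (w @ [i]) p)"
proof -
  define C where "C i = {v \<in> subtree m (w @ [i]). p \<in> I v}" for i
  define U where "U = (\<Union>i\<in>{0,1,2}. C i)"
  have fin: "finite (C i)" for i
    unfolding C_def using finite_subtree by simp
  have "{v \<in> subtree (Suc m) w. p \<in> I v} = (if p \<in> I w then insert w U else U)"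
    unfolding U_def C_def subtree_Suc by auto
  moreover have "w \<notin> U" "finite U"
    unfolding U_def C_def using root_notin_child_subtree finite_subtree by auto
  moreover have "card U = (\<Sum>i\<in>{0,1,2}. card (C i))"
    unfolding U_def by (rule card_UN_disjoint) (use fin in \<open>auto simp: C_def subtree_def\<close>)
  ultimately show ?thesis
    unfolding covering_def C_def by simp
qed

lemma subtree_below_or_above:
  assumes "length x + m \<le> k" "set x \<subseteq> {0,1,2}" "\<forall>v\<in>subtree m x. p \<notin> I v"
  shows "(\<forall>v\<in>subtree m x. I v \<subseteq> {..<p}) \<or> (\<forall>v\<in>subtree m x. I v \<subseteq> {p<..})"
  using assms
proof (induction m arbitrary: x)
  case (Suc m)
  have x: "x \<in> tern_verts k" "p \<notin> I x"
    using Suc.prems subtree_subset_tern_verts[of x "Suc m" k] by (auto simp: subtree_Suc)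
  obtain S where S: "S = {..<p} \<or> S = {p<..}" "I x \<subseteq> S"
    using ord_convex_avoid[OF ord_convex_interval[OF x(1)] x(2)] by blast
  have "\<forall>v\<in>subtree m (x @ [i]). I v \<subseteq> S" if i: "i \<in> {0,1,2}" for i
  proof (cases m)
    case (Suc m')
    have xi: "x @ [i] \<in> subtree m (x @ [i])" "x @ [i] \<in> tern_verts k"
      using Suc.prems i \<open>m = Suc m'\<close> by (auto simp: subtree_def tern_verts_def)
    obtain S' where S': "S' = {..<p} \<or> S' = {p<..}" "\<forall>v\<in>subtree m (x @ [i]). I v \<subseteq> S'"
      using Suc.IH[of "x @ [i]"] Suc.prems i by (auto simp: subtree_Suc)
    have "S \<inter> S' \<noteq> {}"
      using child_overlap[OF i xi(2)] S(2) S'(2) xi(1) by blast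
    then have "S' = S"
      using S(1) S'(1) by auto
    then show ?thesis using S' by blast
  qed simp
  then have "\<forall>v\<in>subtree (Suc m) x. I v \<subseteq> S"
    using S(2) by (auto simp: subtree_Suc)
  then show ?case using S(1) by blast
qed simp

lemma avoided_child_subtree_sides:
  assumes "length w + Suc m = k" "set w \<subseteq> {0,1,2}" "0 < m" "i \<in> {0,1,2}"
    and "covering m (w @ [i]) p = 0" "v \<in> subtree m (w @ [i])" "q \<in> I v"
  shows "q < p \<Longrightarrow> (\<exists>y\<in>I w. y < p) \<and> (\<exists>y\<in>A. y < p)"
    and "p < q \<Longrightarrow> (\<exists>y\<in>I w. p < y) \<and> (\<exists>y\<in>A. p < y)"
proof -
  let ?x = "w @ [i]"
  have x: "?x \<in> subtree m ?x" "?x \<in> tern_verts k"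
    using assms(1-4) by (auto simp: subtree_def tern_verts_def)
  obtain z where z: "z \<in> I w" "z \<in> I ?x"
    using child_overlap[OF assms(4) x(2)] by blast
  obtain l y where l: "l \<in> subtree m ?x" "y \<in> I l" "y \<in> A"
    using subtree_contains_leaf[of ?x m k] assms(1-4) leaf_overlap by fastforce
  have "(\<forall>v\<in>subtree m ?x. I v \<subseteq> {..<p}) \<or> (\<forall>v\<in>subtree m ?x. I v \<subseteq> {p<..})"
    by (rule subtree_below_or_above) (use assms(1,2,4,5) in \<open>auto simp: covering_eq_0_iff\<close>)
  then have "z < p \<and> y < p \<and> q < p \<or> p < z \<and> p < y \<and> p < q"
    using x(1) z(2) l assms(6,7) by blast
  then show "q < p \<Longrightarrow> (\<exists>y\<in>I w. y < p) \<and> (\<exists>y\<in>A. y < p)"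
    and "p < q \<Longrightarrow> (\<exists>y\<in>I w. p < y) \<and> (\<exists>y\<in>A. p < y)"
    using z(1) l(3) by auto
qed

lemma middle_point_covered:
  assumes "length w + Suc m = k" "set w \<subseteq> {0,1,2}" "0 < m" "ord_convex J" "A \<subseteq> J"
    and "a \<in> {0,1,2}" "c \<in> {0,1,2}" "0 < covering m (w @ [a]) pa" "0 < covering m (w @ [c]) pc"
    and "pa \<le> p" "p \<le> pc"
  shows "0 < covering m (w @ [a]) p \<or> 0 < covering m (w @ [c]) p \<or> p \<in> I w \<and> p \<in> J"
proof (rule ccontr)
  assume contra: "\<not> ?thesis"
  then have avoid: "covering m (w @ [a]) p = 0" "covering m (w @ [c]) p = 0"
    by simp_all
  obtain va where va: "va \<in> subtree m (w @ [a])" "pa \<in> I va"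
    using assms(8) covering_eq_0_iff[of m "w @ [a]" pa] by auto
  obtain vc where vc: "vc \<in> subtree m (w @ [c])" "pc \<in> I vc"
    using assms(9) covering_eq_0_iff[of m "w @ [c]" pc] by auto
  have "pa < p" "p < pc"
    using avoid va vc assms(10,11) by (auto simp: covering_eq_0_iff order.order_iff_strict)
  then have "(\<exists>y\<in>I w. y < p) \<and> (\<exists>y\<in>A. y < p)" "(\<exists>y\<in>I w. p < y) \<and> (\<exists>y\<in>A. p < y)"
    using avoided_child_subtree_sides[OF assms(1-3) _ avoid(1) va]
      avoided_child_subtree_sides[OF assms(1-3) _ avoid(2) vc] assms(6,7) by blast+
  moreover have "ord_convex (I w)"
    using assms(1,2) by (intro ord_convex_interval) (simp add: tern_verts_def)
  ultimately show False
    using contra ord_convex_between assms(4,5) by blast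
qed

lemma deep_point_from_children:
  assumes "0 < m" "length w + Suc m = k" "set w \<subseteq> {0,1,2}" "ord_convex J" "A \<subseteq> J"
    and P: "\<forall>i\<in>{0,1,2}. m + 1 \<le> covering m (w @ [i]) (P i) + (if P i \<in> J \<union> I w then 1 else 0)"
  shows "\<exists>p. Suc m + 1 \<le> covering (Suc m) w p + (if p \<in> J then 1 else 0)"
proof -
  have P_pos: "\<forall>i\<in>{0,1,2}. 0 < covering m (w @ [i]) (P i)"
    using P assms(1) by (fastforce split: if_splits)
  obtain a b c where abc: "{a, b, c} = {0, 1, 2}" "distinct [a, b, c]" "P a \<le> P b" "P b \<le> P c"
    by (rule sort_three)
  have abc_mem: "a \<in> {0,1,2}" "b \<in> {0,1,2}" "c \<in> {0,1,2}"
    using abc(1) by blast+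
  define p where "p = P b"
  define Ca Cb Cc where "Ca = covering m (w @ [a]) p" and "Cb = covering m (w @ [b]) p"
    and "Cc = covering m (w @ [c]) p"
  have "0 < Ca \<or> 0 < Cc \<or> p \<in> I w \<and> p \<in> J"
    unfolding Ca_def Cc_def p_def using P_pos abc_mem
    by (intro middle_point_covered[OF assms(2,3,1,4,5) _ _ _ _ abc(3,4)]) auto
  moreover have "m + 1 \<le> Cb + (if p \<in> J \<union> I w then 1 else 0)"
    unfolding Cb_def p_def using P abc_mem by blast
  moreover have "covering (Suc m) w p = (if p \<in> I w then 1 else 0) + Ca + Cb + Cc"
    using abc(2) unfolding covering_Suc Ca_def Cb_def Cc_def abc(1)[symmetric] by (simp add: add.assoc)
  ultimately have "Suc m + 1 \<le> covering (Suc m) w p + (if p \<in> J then 1 else 0)"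
    by (cases "p \<in> I w"; cases "p \<in> J") auto
  then show ?thesis ..
qed

lemma exists_deep_point:
  assumes "0 < m" "length w + m = k" "set w \<subseteq> {0,1,2}" "ord_convex J" "A \<subseteq> J" "I w \<inter> J \<noteq> {}"
  shows "\<exists>p. m + 1 \<le> covering m w p + (if p \<in> J then 1 else 0)"
  using assms
proof (induction m arbitrary: w J)
  case (Suc m)
  show ?case
  proof (cases "m = 0")
    case True
    obtain p where "p \<in> I w" "p \<in> J"
      using Suc.prems(6) by blast
    moreover have "{v \<in> subtree (Suc 0) w. p \<in> I v} = {w}"
      using \<open>p \<in> I w\<close> by (auto simp: subtree_Suc)
    ultimately show ?thesis
      using True by (intro exI[of _ p]) (simp add: covering_def)
  next
    case False
    let ?J = "J \<union> I w"
    have w: "w \<in> tern_verts k"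
      using Suc.prems(2,3) by (simp add: tern_verts_def)
    have J: "ord_convex ?J"
      using ord_convex_Un[OF Suc.prems(4) ord_convex_interval[OF w]] Suc.prems(6) by (simp add: Int_commute)
    have "\<forall>i\<in>{0,1,2}. \<exists>p. m + 1 \<le> covering m (w @ [i]) p + (if p \<in> ?J then 1 else 0)"
    proof
      fix i :: nat assume i: "i \<in> {0,1,2}"
      have "w @ [i] \<in> tern_verts k"
        using Suc.prems(2,3) False i by (auto simp: tern_verts_def)
      then have overlap: "I (w @ [i]) \<inter> ?J \<noteq> {}"
        using child_overlap[OF i] by blast
      have "0 < m" "length (w @ [i]) + m = k" "set (w @ [i]) \<subseteq> {0,1,2}" "A \<subseteq> ?J"
        using False Suc.prems(2,3,5) i by auto
      then show "\<exists>p. m + 1 \<le> covering m (w @ [i]) p + (if p \<in> ?J then 1 else 0)"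
        using Suc.IH J overlap by blast
    qed
    then obtain P where "\<forall>i\<in>{0,1,2}. m + 1 \<le> covering m (w @ [i]) (P i) + (if P i \<in> ?J then 1 else 0)"
      by (rule bchoice[THEN exE])
    then show ?thesis
      using False Suc.prems(2-5) by (intro deep_point_from_children) auto
  qed
qed simp

end

lemma is_path_decomp_bags: "is_path_decomp V E Xs \<Longrightarrow> X \<in> set Xs \<Longrightarrow> X \<subseteq> V"
  unfolding is_path_decomp_def by blast

lemma is_path_decomp_interval:
  "is_path_decomp V E Xs \<Longrightarrow> v \<in> V \<Longrightarrow> i \<le> l \<Longrightarrow> l \<le> j \<Longrightarrow> j < length Xs
    \<Longrightarrow> v \<in> Xs ! i \<Longrightarrow> v \<in> Xs ! j \<Longrightarrow> v \<in> Xs ! l"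
  unfolding is_path_decomp_def by blast

lemma is_path_decomp_edge:
  "is_path_decomp V E Xs \<Longrightarrow> (u, v) \<in># E \<Longrightarrow> \<exists>i<length Xs. u \<in> Xs ! i \<and> v \<in> Xs ! i"
  unfolding is_path_decomp_def by (blast dest: bspec)

definition pd_occurrences :: "'a set list \<Rightarrow> 'a \<Rightarrow> nat set" where
  "pd_occurrences Xs x = {i. i < length Xs \<and> x \<in> Xs ! i}"

lemma ord_convex_pd_occurrences:
  "is_path_decomp V E Xs \<Longrightarrow> x \<in> V \<Longrightarrow> ord_convex (pd_occurrences Xs x)"
  unfolding ord_convex_def pd_occurrences_def
  by (auto intro: is_path_decomp_interval)

lemma pd_occurrences_edge:
  "is_path_decomp V E Xs \<Longrightarrow> (u, v) \<in># E \<Longrightarrow> pd_occurrences Xs u \<inter> pd_occurrences Xs v \<noteq> {}"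
  unfolding pd_occurrences_def by (blast dest: is_path_decomp_edge)

lemma card_bag_le_pd_width:
  assumes "i < length Xs"
  shows "card (Xs ! i) \<le> pd_width Xs + 1"
proof -
  have "card (Xs ! i) \<le> Max (card ` set Xs)"
    using assms by (intro Max_ge) auto
  then show ?thesis
    unfolding pd_width_def by linarith
qed

lemma is_path_decomp_single:
  assumes "\<forall>(u, v)\<in>#E. u \<in> V \<and> v \<in> V"
  shows "is_path_decomp V E [V]"
  unfolding is_path_decomp_def
proof (intro conjI)
  show "\<forall>(u, v)\<in>#E. \<exists>i<length [V]. u \<in> [V] ! i \<and> v \<in> [V] ! i"
    using assms by fastforce
qed auto

lemma pathwidth_geI:
  assumes "is_path_decomp V E Xs" "\<And>Xs. is_path_decomp V E Xs \<Longrightarrow> w \<le> pd_width Xs"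
  shows "w \<le> pathwidth V E"
  unfolding pathwidth_def by (rule LeastI2_ex) (use assms in blast)+

lemma finite_Gstar_V: "finite (Gstar_V k)"
  unfolding Gstar_V_def by (simp add: tern_verts_eq_subtree finite_subtree)

lemma finite_tern_edges: "finite (tern_edges k)"
proof -
  have "tern_edges k \<subseteq> tern_verts k \<times> tern_verts k"
    unfolding tern_edges_def tern_verts_def by auto
  moreover have "finite (tern_verts k \<times> tern_verts k)"
    by (simp add: tern_verts_eq_subtree finite_subtree)
  ultimately show ?thesis
    by (rule finite_subset)
qed

lemma finite_tern_leaves: "finite (tern_leaves k)"
proof -
  have "tern_leaves k \<subseteq> subtree (Suc k) []"
    unfolding tern_leaves_def subtree_def by auto
  then show ?thesis
    using finite_subset finite_subtree by blast
qed

lemma Gstar_E_tree_edge: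
  assumes "i \<in> {0,1,2}" "v @ [i] \<in> tern_verts k"
  shows "(Some v, Some (v @ [i])) \<in># Gstar_E k"
proof -
  have "(v, v @ [i]) \<in> tern_edges k"
    unfolding tern_edges_def using assms by blast
  then show ?thesis
    unfolding Gstar_E_def using finite_tern_edges by force
qed

lemma Gstar_E_root_edge: "(None, Some []) \<in># Gstar_E k"
  unfolding Gstar_E_def by simp

lemma Gstar_E_leaf_edge: "l \<in> tern_leaves k \<Longrightarrow> (None, Some l) \<in># Gstar_E k"
  unfolding Gstar_E_def using finite_tern_leaves by (simp add: set_mset_sum)

lemma Gstar_E_ends_in_V:
  assumes "k \<ge> 1" "(u, v) \<in># Gstar_E k"
  shows "u \<in> Gstar_V k \<and> v \<in> Gstar_V k"
  using assms finite_tern_edges finite_tern_leaves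
  unfolding Gstar_E_def Gstar_V_def tern_edges_def tern_leaves_def tern_verts_def
  by (auto simp: set_mset_sum)

lemma ternary_interval_model_Gstar:
  assumes "is_path_decomp (Gstar_V k) (Gstar_E k) Xs"
  shows "ternary_interval_model k (\<lambda>v. pd_occurrences Xs (Some v)) (pd_occurrences Xs None)"
proof
  show "ord_convex (pd_occurrences Xs (Some v))" if "v \<in> tern_verts k" for v
    using that by (intro ord_convex_pd_occurrences[OF assms]) (simp add: Gstar_V_def)
  show "pd_occurrences Xs (Some v) \<inter> pd_occurrences Xs (Some (v @ [i])) \<noteq> {}"
    if "i \<in> {0,1,2}" "v @ [i] \<in> tern_verts k" for i v
    using pd_occurrences_edge[OF assms Gstar_E_tree_edge[OF that]] .
  show "pd_occurrences Xs (Some l) \<inter> pd_occurrences Xs None \<noteq> {}" if "l \<in> tern_leaves k" for l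
    using pd_occurrences_edge[OF assms Gstar_E_leaf_edge[OF that]] by blast
qed

lemma pd_width_Gstar_ge:
  assumes "k \<ge> 1" "is_path_decomp (Gstar_V k) (Gstar_E k) Xs"
  shows "k \<le> pd_width Xs"
proof -
  interpret ternary_interval_model k "\<lambda>v. pd_occurrences Xs (Some v)" "pd_occurrences Xs None"
    by (rule ternary_interval_model_Gstar[OF assms(2)])
  let ?A = "pd_occurrences Xs None"
  have "pd_occurrences Xs (Some []) \<inter> ?A \<noteq> {}"
    using pd_occurrences_edge[OF assms(2) Gstar_E_root_edge] by blast
  moreover have "ord_convex ?A"
    using ord_convex_pd_occurrences[OF assms(2)] by (simp add: Gstar_V_def)
  ultimately obtain p where p: "k + 1 \<le> covering k [] p + (if p \<in> ?A then 1 else 0)"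
    using exists_deep_point[of k "[]" ?A] assms(1) by auto
  define S where "S = {v \<in> subtree k []. p \<in> pd_occurrences Xs (Some v)}"
  define B where "B = (if p \<in> ?A then insert None (Some ` S) else Some ` S)"
  have "card B = covering k [] p + (if p \<in> ?A then 1 else 0)"
    unfolding B_def S_def covering_def by (simp add: card_image finite_subtree)
  with p have B: "k + 1 \<le> card B"
    by simp
  then obtain x where "x \<in> B"
    by fastforce
  then have "p < length Xs"
    unfolding B_def S_def pd_occurrences_def by (auto split: if_splits)
  have "B \<subseteq> Xs ! p"
    unfolding B_def S_def pd_occurrences_def by auto
  moreover have "finite (Xs ! p)"
    using is_path_decomp_bags[OF assms(2) nth_mem[OF \<open>p < length Xs\<close>]] finite_Gstar_V
    by (rule finite_subset)
  ultimately have "k + 1 \<le> card (Xs ! p)"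
    using B card_mono by (metis le_trans)
  then show ?thesis
    using card_bag_le_pd_width[OF \<open>p < length Xs\<close>] by linarith
qed

theorem lemma3p5:
  fixes k :: nat
  assumes "k \<ge> 1"
  shows "pathwidth (Gstar_V k) (Gstar_E k) \<ge> k"
proof (rule pathwidth_geI)
  show "is_path_decomp (Gstar_V k) (Gstar_E k) [Gstar_V k]"
    using Gstar_E_ends_in_V[OF assms] by (intro is_path_decomp_single) blast
qed (rule pd_width_Gstar_ge[OF assms])

end
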